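(* Let $R$ be a commutative ring that is $\aleph_0$-self-injective. Then for any two countably generated ideals $I_1,I_2$ of $R$, $\mathrm{Ann}(I_1\cap I_2)=\mathrm{Ann}(I_1)+\mathrm{Ann}(I_2)$; that is, $R$ is an $\aleph_0$-IK ring.
   Context: $R$ is $\aleph_0$-self-injective if every $R$-homomorphism from a countably generated ideal $I$ of $R$ into $R$ extends to an $R$-homomorphism $R\to R$. For a subset $X$ of a commutative ring $R$, $\mathrm{Ann}(X)=\{r\in R: rx=0 \text{ for all } x\in X\}$. *)

theory Defs
  imports Main "HOL-Library.Countable_Set"
begin

definition is_ideal :: "'a::comm_ring_1 set \<Rightarrow> bool" where
  "is_ideal I \<longleftrightarrow> 0 \<in> I \<and> (\<forall>x\<in>I. \<forall>y\<in>I. x + y \<in> I) \<and> (\<forall>r x. x \<in> I \<longrightarrow> r * x \<in> I)"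

definition ideal_gen :: "'a::comm_ring_1 set \<Rightarrow> 'a set" where
  "ideal_gen S = \<Inter>{J. is_ideal J \<and> S \<subseteq> J}"

definition countably_generated_ideal :: "'a::comm_ring_1 set \<Rightarrow> bool" where
  "countably_generated_ideal I \<longleftrightarrow> (\<exists>S. countable S \<and> I = ideal_gen S)"

definition R_hom_on :: "'a::comm_ring_1 set \<Rightarrow> ('a \<Rightarrow> 'a) \<Rightarrow> bool" where
  "R_hom_on I f \<longleftrightarrow> (\<forall>x\<in>I. \<forall>y\<in>I. f (x + y) = f x + f y) \<and> (\<forall>r. \<forall>x\<in>I. f (r * x) = r * f x)"

definition aleph0_self_injective :: "'a::comm_ring_1 itself \<Rightarrow> bool" where
  "aleph0_self_injective _ \<longleftrightarrow>
     (\<forall>(I::'a set) f. is_ideal I \<and> countably_generated_ideal I \<and> R_hom_on I f \<longrightarrow>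
        (\<exists>g. R_hom_on UNIV g \<and> (\<forall>x\<in>I. g x = f x)))"

definition Ann :: "'a::comm_ring_1 set \<Rightarrow> 'a set" where
  "Ann X = {r. \<forall>x\<in>X. r * x = 0}"

definition ideal_sum :: "'a::comm_ring_1 set \<Rightarrow> 'a set \<Rightarrow> 'a set" where
  "ideal_sum A B = {a + b | a b. a \<in> A \<and> b \<in> B}"

end

theory Submission
  imports Defs
begin

(* The inclusion Ann I1 + Ann I2 \<subseteq> Ann (I1 \<inter> I2) holds for arbitrary sets.
   For the converse, let r annihilate I1 \<inter> I2.  On the ideal I1 + I2 the map
   a + b \<mapsto> r * a  (a \<in> I1, b \<in> I2) is well defined, since two decompositions of the
   same element differ by an element of I1 \<inter> I2, and it is R-linear.  I1 + I2 is
   countably generated, so by \<aleph>0-self-injectivity this map extends to an R-linear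
   map R \<rightarrow> R, which is multiplication by some c.  Evaluating on I1 and on I2 gives
   r - c \<in> Ann I1 and c \<in> Ann I2, hence r = (r - c) + c \<in> Ann I1 + Ann I2. *)

lemma ideal_zero: "is_ideal I \<Longrightarrow> 0 \<in> I"
  unfolding is_ideal_def by blast

lemma ideal_add: "is_ideal I \<Longrightarrow> x \<in> I \<Longrightarrow> y \<in> I \<Longrightarrow> x + y \<in> I"
  unfolding is_ideal_def by blast

lemma ideal_mult: "is_ideal I \<Longrightarrow> x \<in> I \<Longrightarrow> r * x \<in> I"
  unfolding is_ideal_def by blast

lemma ideal_diff: "is_ideal I \<Longrightarrow> a \<in> I \<Longrightarrow> b \<in> I \<Longrightarrow> a - b \<in> I"
  unfolding is_ideal_def by (metis diff_conv_add_uminus mult_minus1)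

lemma ideal_gen_ideal: "is_ideal (ideal_gen S)"
  unfolding ideal_gen_def is_ideal_def by auto

lemma ideal_gen_superset: "S \<subseteq> ideal_gen S"
  unfolding ideal_gen_def by auto

lemma ideal_gen_least: "is_ideal J \<Longrightarrow> S \<subseteq> J \<Longrightarrow> ideal_gen S \<subseteq> J"
  unfolding ideal_gen_def by auto

lemma ideal_sumI: "a \<in> A \<Longrightarrow> b \<in> B \<Longrightarrow> x = a + b \<Longrightarrow> x \<in> ideal_sum A B"
  unfolding ideal_sum_def by blast

lemma ideal_sumE:
  "x \<in> ideal_sum A B \<Longrightarrow> (\<And>a b. a \<in> A \<Longrightarrow> b \<in> B \<Longrightarrow> x = a + b \<Longrightarrow> P) \<Longrightarrow> P"
  unfolding ideal_sum_def by blast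

lemma ideal_sum_left: "is_ideal B \<Longrightarrow> a \<in> A \<Longrightarrow> a \<in> ideal_sum A B"
  by (rule ideal_sumI[OF _ ideal_zero]) simp_all

lemma ideal_sum_right: "is_ideal A \<Longrightarrow> b \<in> B \<Longrightarrow> b \<in> ideal_sum A B"
  by (rule ideal_sumI[OF ideal_zero]) simp_all

lemma ideal_sum_ideal:
  assumes A: "is_ideal A" and B: "is_ideal B"
  shows "is_ideal (ideal_sum A B)"
  unfolding is_ideal_def
proof (intro conjI allI impI ballI)
  show "0 \<in> ideal_sum A B"
    using ideal_sum_left[OF B ideal_zero[OF A]] .
next
  fix x y assume "x \<in> ideal_sum A B" "y \<in> ideal_sum A B"
  then obtain a b c d where h: "a \<in> A" "b \<in> B" "c \<in> A" "d \<in> B" "x = a + b" "y = c + d"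
    by (metis ideal_sumE)
  show "x + y \<in> ideal_sum A B"
    by (rule ideal_sumI[OF ideal_add[OF A h(1,3)] ideal_add[OF B h(2,4)]])
      (simp add: h algebra_simps)
next
  fix r x assume "x \<in> ideal_sum A B"
  then obtain a b where h: "a \<in> A" "b \<in> B" "x = a + b" by (metis ideal_sumE)
  show "r * x \<in> ideal_sum A B"
    by (rule ideal_sumI[OF ideal_mult[OF A h(1)] ideal_mult[OF B h(2)]])
      (simp add: h algebra_simps)
qed

lemma ideal_sum_ideal_gen: "ideal_sum (ideal_gen S) (ideal_gen T) = ideal_gen (S \<union> T)"
proof
  have "S \<union> T \<subseteq> ideal_sum (ideal_gen S) (ideal_gen T)"
  proof
    fix x assume "x \<in> S \<union> T"
    then show "x \<in> ideal_sum (ideal_gen S) (ideal_gen T)"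
    proof
      assume "x \<in> S"
      then show ?thesis by (intro ideal_sum_left ideal_gen_ideal) (use ideal_gen_superset in blast)
    next
      assume "x \<in> T"
      then show ?thesis by (intro ideal_sum_right ideal_gen_ideal) (use ideal_gen_superset in blast)
    qed
  qed
  then show "ideal_gen (S \<union> T) \<subseteq> ideal_sum (ideal_gen S) (ideal_gen T)"
    by (rule ideal_gen_least[OF ideal_sum_ideal[OF ideal_gen_ideal ideal_gen_ideal]])
next
  have G: "is_ideal (ideal_gen (S \<union> T))" by (rule ideal_gen_ideal)
  have "ideal_gen S \<subseteq> ideal_gen (S \<union> T)" "ideal_gen T \<subseteq> ideal_gen (S \<union> T)"
    using ideal_gen_least[OF G] ideal_gen_superset[of "S \<union> T"] by blast+
  then show "ideal_sum (ideal_gen S) (ideal_gen T) \<subseteq> ideal_gen (S \<union> T)"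
    using ideal_add[OF G] unfolding ideal_sum_def by blast
qed

lemma ideal_sum_countably_generated:
  assumes "countably_generated_ideal A" "countably_generated_ideal B"
  shows "countably_generated_ideal (ideal_sum A B)"
proof -
  obtain S T where "countable S" "A = ideal_gen S" "countable T" "B = ideal_gen T"
    using assms unfolding countably_generated_ideal_def by blast
  then show ?thesis
    unfolding countably_generated_ideal_def by (metis countable_Un ideal_sum_ideal_gen)
qed

lemma ideal_sum_Ann_subset: "ideal_sum (Ann A) (Ann B) \<subseteq> Ann (A \<inter> B)"
  unfolding Ann_def by (auto elim!: ideal_sumE simp: distrib_right)

lemma R_hom_on_UNIV_mult: "R_hom_on UNIV g \<Longrightarrow> g x = x * g 1"
  unfolding R_hom_on_def by (metis iso_tuple_UNIV_I mult.right_neutral)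

definition first_component_map :: "'a::comm_ring_1 set \<Rightarrow> 'a set \<Rightarrow> 'a \<Rightarrow> 'a \<Rightarrow> 'a" where
  "first_component_map I1 I2 r x = r * (SOME a. a \<in> I1 \<and> x - a \<in> I2)"

text \<open>The map does not depend on the chosen decomposition, because two first
  components of x differ by an element of I1 \<inter> I2, which r kills.\<close>

lemma first_component_map_eq:
  assumes I1: "is_ideal I1" and I2: "is_ideal I2" and r: "r \<in> Ann (I1 \<inter> I2)"
    and a: "a \<in> I1" "x - a \<in> I2"
  shows "first_component_map I1 I2 r x = r * a"
proof -
  define a' where "a' = (SOME a. a \<in> I1 \<and> x - a \<in> I2)"
  have a': "a' \<in> I1" "x - a' \<in> I2"
    unfolding a'_def using someI[of "\<lambda>a. a \<in> I1 \<and> x - a \<in> I2"] a by blast+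
  have "a - a' \<in> I1" using ideal_diff[OF I1 a(1) a'(1)] .
  moreover have "a - a' = (x - a') - (x - a)" by simp
  then have "a - a' \<in> I2" using ideal_diff[OF I2 a'(2) a(2)] by simp
  ultimately have "r * (a - a') = 0" using r unfolding Ann_def by blast
  then show ?thesis
    unfolding first_component_map_def a'_def[symmetric] by (simp add: right_diff_distrib)
qed

lemma first_component_map_R_hom:
  assumes I1: "is_ideal I1" and I2: "is_ideal I2" and r: "r \<in> Ann (I1 \<inter> I2)"
  shows "R_hom_on (ideal_sum I1 I2) (first_component_map I1 I2 r)"
  unfolding R_hom_on_def
proof (intro conjI ballI allI)
  note eq = first_component_map_eq[OF I1 I2 r]
  fix x y assume "x \<in> ideal_sum I1 I2" "y \<in> ideal_sum I1 I2"
  then obtain a b c d where h: "a \<in> I1" "b \<in> I2" "x = a + b" "c \<in> I1" "d \<in> I2" "y = c + d"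
    by (metis ideal_sumE)
  have "first_component_map I1 I2 r (x + y) = r * (a + c)"
    by (rule eq[OF ideal_add[OF I1 h(1,4)]])
      (simp add: h ideal_add[OF I2 h(2,5)] algebra_simps)
  moreover have "first_component_map I1 I2 r x = r * a" by (rule eq) (simp_all add: h)
  moreover have "first_component_map I1 I2 r y = r * c" by (rule eq) (simp_all add: h)
  ultimately show "first_component_map I1 I2 r (x + y)
      = first_component_map I1 I2 r x + first_component_map I1 I2 r y"
    by (simp add: distrib_left)
next
  note eq = first_component_map_eq[OF I1 I2 r]
  fix s x assume "x \<in> ideal_sum I1 I2"
  then obtain a b where h: "a \<in> I1" "b \<in> I2" "x = a + b" by (metis ideal_sumE)
  have "first_component_map I1 I2 r (s * x) = r * (s * a)"
    by (rule eq[OF ideal_mult[OF I1 h(1)]]) (simp add: h ideal_mult[OF I2 h(2)] distrib_left)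
  moreover have "first_component_map I1 I2 r x = r * a" by (rule eq) (simp_all add: h)
  ultimately show "first_component_map I1 I2 r (s * x) = s * first_component_map I1 I2 r x"
    by (simp add: mult.left_commute)
qed

text \<open>If the map a + b \<mapsto> r * a extends to an R-linear g : R \<rightarrow> R, i.e. to
  multiplication by c = g 1, then r = (r - c) + c with r - c \<in> Ann I1 and c \<in> Ann I2.\<close>

lemma Ann_decomposition_from_extension:
  assumes I1: "is_ideal I1" and I2: "is_ideal I2" and r: "r \<in> Ann (I1 \<inter> I2)"
    and g: "R_hom_on UNIV g"
    and ext: "\<forall>x\<in>ideal_sum I1 I2. g x = first_component_map I1 I2 r x"
  shows "r \<in> ideal_sum (Ann I1) (Ann I2)"
proof -
  define c where "c = g 1"
  have g_mult: "g x = x * c" for x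
    unfolding c_def using R_hom_on_UNIV_mult[OF g] .
  note eq = first_component_map_eq[OF I1 I2 r]
  have "r - c \<in> Ann I1"
  proof (unfold Ann_def, intro CollectI ballI)
    fix x assume x: "x \<in> I1"
    have "x * c = r * x"
      using ext ideal_sum_left[OF I2 x] eq[OF x] ideal_zero[OF I2] g_mult[of x] by simp
    then show "(r - c) * x = 0" by (simp add: algebra_simps)
  qed
  moreover have "c \<in> Ann I2"
  proof (unfold Ann_def, intro CollectI ballI)
    fix x assume x: "x \<in> I2"
    have "x * c = r * 0"
      using ext ideal_sum_right[OF I1 x] eq[OF ideal_zero[OF I1]] x g_mult[of x] by simp
    then show "c * x = 0" by (simp add: mult.commute)
  qed
  ultimately show ?thesis by (rule ideal_sumI) simp
qed

theorem lemma2p2: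
  assumes "aleph0_self_injective TYPE('a::comm_ring_1)"
    and "is_ideal (I1::'a set)" and "countably_generated_ideal I1"
    and "is_ideal (I2::'a set)" and "countably_generated_ideal I2"
  shows "Ann (I1 \<inter> I2) = ideal_sum (Ann I1) (Ann I2)"
proof
  show "Ann (I1 \<inter> I2) \<subseteq> ideal_sum (Ann I1) (Ann I2)"
  proof
    fix r assume r: "r \<in> Ann (I1 \<inter> I2)"
    have "is_ideal (ideal_sum I1 I2)"
      using ideal_sum_ideal assms(2,4) by blast
    moreover have "countably_generated_ideal (ideal_sum I1 I2)"
      using ideal_sum_countably_generated assms(3,5) by blast
    moreover have "R_hom_on (ideal_sum I1 I2) (first_component_map I1 I2 r)"
      using first_component_map_R_hom assms(2,4) r by blast
    ultimately obtain g where "R_hom_on UNIV g"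
      "\<forall>x\<in>ideal_sum I1 I2. g x = first_component_map I1 I2 r x"
      using assms(1) unfolding aleph0_self_injective_def by blast
    then show "r \<in> ideal_sum (Ann I1) (Ann I2)"
      using Ann_decomposition_from_extension assms(2,4) r by blast
  qed
qed (rule ideal_sum_Ann_subset)

end
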